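(* Let $X$ be a $T_1$ topological space with at least two points and let $f\neq g$ be vertices of $\Gamma(C_c(X)_F)$. Then (i) $c(f,g)=3$ iff $Z(f)\cup Z(g)=X$ and $Z(f)\cap Z(g)\neq\emptyset$; (ii) $c(f,g)=4$ iff either ($Z(f)\cup Z(g)=X$ and $Z(f)\cap Z(g)=\emptyset$) or ($Z(f)\cup Z(g)\neq X$ and $Z(f)\cap Z(g)\neq\emptyset$); (iii) $c(f,g)=6$ iff $Z(f)\cup Z(g)\neq X$ and $Z(f)\cap Z(g)=\emptyset$.
   Context: $C_c(X)_F$ denotes the set of all functions $f:X\to\mathbb{R}$ whose range is countable and whose set of points of discontinuity is finite. $Z(f)=\{x:f(x)=0\}$. $\Gamma(C_c(X)_F)$ is the zero-divisor graph: vertices are the nonzero zero divisors of $C_c(X)_F$, and distinct vertices $f,g$ are adjacent iff $fg=0$. $c(f,g)$ is the length of a shortest cycle (with distinct vertices) containing both $f$ and $g$, and $c(f,g)=\infty$ if no such cycle exists. *)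

theory Defs
  imports Complex_Main "HOL-Library.Extended_Nat"
begin

text \<open>The space X is the whole carrier of a type of class t1_space
  (topology given by the type class). C_c(X)_F: real functions with countable
  range and finitely many points of discontinuity.\<close>

definition CcF :: "('a::topological_space \<Rightarrow> real) set" where
  "CcF = {f. countable (range f) \<and> finite {x. \<not> (f \<longlongrightarrow> f x) (at x)}}"

definition Zset :: "('a \<Rightarrow> real) \<Rightarrow> 'a set" where
  "Zset f = {x. f x = 0}"

definition zd_vertex :: "('a::topological_space \<Rightarrow> real) \<Rightarrow> bool" where
  "zd_vertex f \<longleftrightarrow> f \<in> CcF \<and> f \<noteq> (\<lambda>x. 0) \<and>
     (\<exists>h\<in>CcF. h \<noteq> (\<lambda>x. 0) \<and> (\<forall>x. f x * h x = 0))"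

definition zd_adj :: "('a::topological_space \<Rightarrow> real) \<Rightarrow> ('a \<Rightarrow> real) \<Rightarrow> bool" where
  "zd_adj f g \<longleftrightarrow> zd_vertex f \<and> zd_vertex g \<and> f \<noteq> g \<and> (\<forall>x. f x * g x = 0)"

definition zd_cycle :: "('a::topological_space \<Rightarrow> real) list \<Rightarrow> bool" where
  "zd_cycle cs \<longleftrightarrow> 3 \<le> length cs \<and> distinct cs \<and>
     (\<forall>i < length cs. zd_adj (cs ! i) (cs ! ((i + 1) mod length cs)))"

text \<open>c(f,g): least length of a cycle containing f and g; infinity if none
  (Inf of the empty set of enat is infinity).\<close>
definition cfg :: "('a::topological_space \<Rightarrow> real) \<Rightarrow> ('a \<Rightarrow> real) \<Rightarrow> enat" where
  "cfg f g = Inf {enat (length cs) | cs. zd_cycle cs \<and> f \<in> set cs \<and> g \<in> set cs}"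

end

theory Submission
  imports Defs "HOL-Library.Indicator_Function"
begin

text \<open>Adjacent vertices have zero sets covering X, and two vertices with a common neighbour h
  vanish together wherever h does not. In a cycle of length at most 5 any two vertices are
  adjacent or have a common neighbour, and in a triangle they are both; this gives the lower
  bounds. The matching cycles are built from f, g, the indicators of single points (continuous
  off the point because X is T1) and doubles of these functions.\<close>

lemma CcF_scale:
  assumes "f \<in> CcF"
  shows "(\<lambda>z. c * f z) \<in> CcF"
proof -
  have "range (\<lambda>z. c * f z) = (*) c ` range f" by auto
  then have "countable (range (\<lambda>z. c * f z))"
    using assms by (simp add: CcF_def)
  moreover have "{x. \<not> ((\<lambda>z. c * f z) \<longlongrightarrow> c * f x) (at x)} \<subseteq> {x. \<not> (f \<longlongrightarrow> f x) (at x)}"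
    using tendsto_mult_left by blast
  ultimately show ?thesis
    using assms finite_subset by (auto simp: CcF_def)
qed

lemma CcF_indicator_singleton: "(indicator {x} :: 'a::t1_space \<Rightarrow> real) \<in> CcF"
proof -
  have "range (indicator {x} :: 'a \<Rightarrow> real) \<subseteq> {0, 1}" by (auto simp: indicator_def)
  then have "countable (range (indicator {x} :: 'a \<Rightarrow> real))"
    using countable_finite finite_subset by blast
  moreover have "(indicator {x} \<longlongrightarrow> (indicator {x} y :: real)) (at y)" if "y \<noteq> x" for y
  proof (rule tendsto_eventually)
    show "\<forall>\<^sub>F z in at y. (indicator {x} z :: real) = indicator {x} y"
      by (rule eventually_mono[OF eventually_neq_at_within[of x]]) (use that in auto)
  qed
  then have "{y. \<not> (indicator {x} \<longlongrightarrow> (indicator {x} y :: real)) (at y)} \<subseteq> {x}" by blast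
  ultimately show ?thesis
    unfolding CcF_def using finite_subset by blast
qed

lemma indicator_singleton_nonzero: "indicator {x} \<noteq> (\<lambda>z. 0 :: real)"
proof
  assume "indicator {x} = (\<lambda>z. 0 :: real)"
  then have "indicator {x} x = (0::real)" by simp
  then show False by simp
qed

text \<open>The indicator of a zero of f annihilates f.\<close>
lemma zd_vertex_iff_Zset:
  fixes f :: "'a::t1_space \<Rightarrow> real"
  shows "zd_vertex f \<longleftrightarrow> f \<in> CcF \<and> f \<noteq> (\<lambda>x. 0) \<and> Zset f \<noteq> {}"
proof
  assume f: "zd_vertex f"
  then obtain h where "h \<noteq> (\<lambda>x. 0)" "\<forall>x. f x * h x = 0"
    unfolding zd_vertex_def by blast
  then obtain x where "h x \<noteq> 0" "f x * h x = 0"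
    by (auto simp: fun_eq_iff)
  then have "f x = 0" by simp
  with f show "f \<in> CcF \<and> f \<noteq> (\<lambda>x. 0) \<and> Zset f \<noteq> {}"
    unfolding zd_vertex_def Zset_def by blast
next
  assume "f \<in> CcF \<and> f \<noteq> (\<lambda>x. 0) \<and> Zset f \<noteq> {}"
  moreover from this obtain x where "f x = 0" by (auto simp: Zset_def)
  then have "\<forall>z. f z * indicator {x} z = 0"
    by (auto simp: indicator_def)
  moreover have "indicator {x} \<noteq> (\<lambda>z. 0 :: real)"
    by (rule indicator_singleton_nonzero)
  ultimately show "zd_vertex f"
    unfolding zd_vertex_def using CcF_indicator_singleton by blast
qed

lemma zd_vertex_scale:
  fixes f :: "'a::t1_space \<Rightarrow> real"
  assumes "zd_vertex f" "c \<noteq> 0"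
  shows "zd_vertex (\<lambda>z. c * f z)"
  using assms CcF_scale by (auto simp: zd_vertex_iff_Zset Zset_def fun_eq_iff)

lemma zd_vertex_indicator_singleton:
  assumes "y \<noteq> x"
  shows "zd_vertex (indicator {x} :: 'a::t1_space \<Rightarrow> real)"
proof -
  have "y \<in> Zset (indicator {x} :: 'a \<Rightarrow> real)"
    using assms by (simp add: Zset_def)
  then show ?thesis
    unfolding zd_vertex_iff_Zset using CcF_indicator_singleton[of x] indicator_singleton_nonzero[of x] by blast
qed

lemma zd_vertex_indicator_zero:
  fixes f :: "'a::t1_space \<Rightarrow> real"
  assumes "zd_vertex f" "f x = 0"
  shows "zd_vertex (indicator {x} :: 'a \<Rightarrow> real)"
proof -
  obtain y where "f y \<noteq> 0"
    using assms(1) by (auto simp: zd_vertex_def fun_eq_iff)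
  with assms(2) have "y \<noteq> x" by blast
  then show ?thesis by (rule zd_vertex_indicator_singleton)
qed

lemma zd_adj_sym: "zd_adj f g \<Longrightarrow> zd_adj g f"
  unfolding zd_adj_def by (auto simp: mult.commute)

lemma zd_adj_Zset_Un: "zd_adj f g \<Longrightarrow> Zset f \<union> Zset g = UNIV"
  unfolding zd_adj_def Zset_def by auto

lemma zd_adj_common_Zset_Int:
  assumes "zd_adj f h" "zd_adj h g"
  shows "Zset f \<inter> Zset g \<noteq> {}"
proof -
  obtain x where "h x \<noteq> 0"
    using assms(1) unfolding zd_adj_def zd_vertex_def by (auto simp: fun_eq_iff)
  moreover have "f x * h x = 0" "h x * g x = 0"
    using assms unfolding zd_adj_def by blast+
  ultimately have "x \<in> Zset f \<inter> Zset g"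
    by (simp add: Zset_def)
  then show ?thesis by blast
qed

definition zd_within2 :: "('a::topological_space \<Rightarrow> real) \<Rightarrow> ('a \<Rightarrow> real) \<Rightarrow> bool" where
  "zd_within2 f g \<longleftrightarrow> zd_adj f g \<or> (\<exists>h. zd_adj f h \<and> zd_adj h g)"

lemma zd_within2_sym: "zd_within2 f g \<Longrightarrow> zd_within2 g f"
  unfolding zd_within2_def using zd_adj_sym by blast

lemma zd_within2_Zset:
  "zd_within2 f g \<Longrightarrow> Zset f \<union> Zset g = UNIV \<or> Zset f \<inter> Zset g \<noteq> {}"
  unfolding zd_within2_def using zd_adj_Zset_Un zd_adj_common_Zset_Int by blast

lemma zd_cycleI:
  assumes "3 \<le> length cs" "distinct cs" "\<forall>f\<in>set cs. zd_vertex f"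
    and "\<forall>i < length cs. \<forall>z. (cs ! i) z * (cs ! ((i + 1) mod length cs)) z = 0"
  shows "zd_cycle cs"
  unfolding zd_cycle_def
proof (intro conjI allI impI assms(1,2))
  fix i assume i: "i < length cs"
  have "(i + 1) mod length cs \<noteq> i"
    using assms(1) i by (cases "Suc i = length cs") auto
  moreover have "(i + 1) mod length cs < length cs"
    using assms(1) by (intro mod_less_divisor) auto
  ultimately have "cs ! i \<noteq> cs ! ((i + 1) mod length cs)"
    "cs ! ((i + 1) mod length cs) \<in> set cs" "cs ! i \<in> set cs"
    using assms(2) i by (simp_all add: nth_eq_iff_index_eq)
  then show "zd_adj (cs ! i) (cs ! ((i + 1) mod length cs))"
    unfolding zd_adj_def using assms(3,4) i by blast
qed

lemma zd_cycle_nth_adj: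
  assumes "zd_cycle cs"
  shows "zd_adj (cs ! (i mod length cs)) (cs ! (Suc i mod length cs))"
proof -
  have "i mod length cs < length cs"
    using assms by (auto simp: zd_cycle_def intro!: mod_less_divisor)
  with assms show ?thesis
    unfolding zd_cycle_def by (metis Suc_eq_plus1 mod_Suc_eq)
qed

lemma cyclic_offset:
  fixes i j n :: nat
  assumes "i < n" "j < n" "i \<noteq> j"
  obtains d where "0 < d" "d < n" "j = (i + d) mod n" "i = (j + (n - d)) mod n"
proof (cases "i < j")
  case True
  show ?thesis
  proof (rule that[of "j - i"])
    have "j + (n - (j - i)) = i + n" using True assms by simp
    then show "i = (j + (n - (j - i))) mod n" using assms by simp
  qed (use True assms in auto)
next
  case False
  show ?thesis
  proof (rule that[of "n + j - i"])
    have "i + (n + j - i) = j + n" using False assms by simp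
    then show "j = (i + (n + j - i)) mod n" using assms by simp
    have "j + (n - (n + j - i)) = i" using False assms by simp
    then show "i = (j + (n - (n + j - i))) mod n" using assms by simp
  qed (use False assms in auto)
qed

lemma zd_cycle_within2:
  assumes "zd_cycle cs" "d = 1 \<or> d = 2"
  shows "zd_within2 (cs ! (i mod length cs)) (cs ! ((i + d) mod length cs))"
  using assms(2) zd_cycle_nth_adj[OF assms(1), of i] zd_cycle_nth_adj[OF assms(1), of "Suc i"]
  unfolding zd_within2_def by auto

lemma zd_cycle_short_within2:
  assumes cs: "zd_cycle cs" "length cs \<le> 5"
    and fg: "f \<in> set cs" "g \<in> set cs" "f \<noteq> g"
  shows "zd_within2 f g"
proof -
  let ?n = "length cs"
  obtain i j where ij: "i < ?n" "j < ?n" "f = cs ! i" "g = cs ! j"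
    using fg by (auto simp: in_set_conv_nth)
  with fg have "i \<noteq> j" by blast
  with ij obtain d where d: "0 < d" "d < ?n" "j = (i + d) mod ?n" "i = (j + (?n - d)) mod ?n"
    by (metis cyclic_offset)
  show ?thesis
  proof (cases "d \<le> 2")
    case True
    with d have "zd_within2 (cs ! (i mod ?n)) (cs ! ((i + d) mod ?n))"
      by (intro zd_cycle_within2 cs(1)) auto
    with ij(1,3,4) d(3) show ?thesis by simp
  next
    case False
    with cs(2) d have "zd_within2 (cs ! (j mod ?n)) (cs ! ((j + (?n - d)) mod ?n))"
      by (intro zd_cycle_within2 cs(1)) auto
    with ij(2,3,4) d(4) show ?thesis by (simp add: zd_within2_sym)
  qed
qed

lemma zd_triangle_adj:
  assumes cs: "zd_cycle cs" "length cs = 3"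
    and fg: "f \<in> set cs" "g \<in> set cs" "f \<noteq> g"
  shows "zd_adj f g"
proof -
  let ?n = "length cs"
  obtain i j where ij: "i < ?n" "j < ?n" "f = cs ! i" "g = cs ! j"
    using fg by (auto simp: in_set_conv_nth)
  with fg have "i \<noteq> j" by blast
  with ij obtain d where d: "0 < d" "d < ?n" "j = (i + d) mod ?n" "i = (j + (?n - d)) mod ?n"
    by (metis cyclic_offset)
  with cs(2) consider "d = 1" | "?n - d = 1" by linarith
  then show ?thesis
  proof cases
    case 1
    with ij(1,3,4) d(3) show ?thesis
      using zd_cycle_nth_adj[OF cs(1), of i] by simp
  next
    case 2
    with ij(2,3,4) d(4) show ?thesis
      using zd_cycle_nth_adj[OF cs(1), of j] by (simp add: zd_adj_sym)
  qed
qed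

lemma zd_triangle_Zset:
  assumes "zd_cycle cs" "length cs = 3" "f \<in> set cs" "g \<in> set cs" "f \<noteq> g"
  shows "Zset f \<union> Zset g = UNIV \<and> Zset f \<inter> Zset g \<noteq> {}"
proof -
  have "card (set cs) = 3"
    using assms(1,2) by (simp add: zd_cycle_def distinct_card)
  moreover have "card {f, g} = 2"
    using assms(5) by simp
  ultimately have "\<not> set cs \<subseteq> {f, g}"
    using card_mono[of "{f, g}" "set cs"] by auto
  then obtain h where "h \<in> set cs" "h \<noteq> f" "h \<noteq> g" by blast
  with assms have "zd_adj f g" "zd_adj f h" "zd_adj h g"
    by (auto intro: zd_triangle_adj)
  then show ?thesis
    using zd_adj_Zset_Un zd_adj_common_Zset_Int by blast
qed

lemma cfg_le_length:
  assumes "zd_cycle cs" "f \<in> set cs" "g \<in> set cs"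
  shows "cfg f g \<le> enat (length cs)"
  unfolding cfg_def using assms by (intro Inf_lower) blast

lemma cfg_ge:
  assumes "\<And>cs. zd_cycle cs \<Longrightarrow> f \<in> set cs \<Longrightarrow> g \<in> set cs \<Longrightarrow> n \<le> length cs"
  shows "enat n \<le> cfg f g"
  unfolding cfg_def using assms by (intro Inf_greatest) auto

lemma cfg_ge_3: "3 \<le> cfg f g"
proof -
  have "enat 3 \<le> cfg f g"
    by (rule cfg_ge) (simp add: zd_cycle_def)
  then show ?thesis by (simp add: numeral_eq_enat)
qed

lemma cfg_ge_4:
  assumes "f \<noteq> g" "\<not> (Zset f \<union> Zset g = UNIV \<and> Zset f \<inter> Zset g \<noteq> {})"
  shows "4 \<le> cfg f g"
proof -
  have "enat 4 \<le> cfg f g"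
  proof (rule cfg_ge)
    fix cs assume cs: "zd_cycle cs" "f \<in> set cs" "g \<in> set cs"
    then have "length cs \<noteq> 3"
      using zd_triangle_Zset assms by blast
    with cs(1) show "4 \<le> length cs"
      by (simp add: zd_cycle_def)
  qed
  then show ?thesis by (simp add: numeral_eq_enat)
qed

lemma cfg_ge_6:
  assumes "f \<noteq> g" "Zset f \<union> Zset g \<noteq> UNIV" "Zset f \<inter> Zset g = {}"
  shows "6 \<le> cfg f g"
proof -
  have "enat 6 \<le> cfg f g"
  proof (rule cfg_ge)
    fix cs assume cs: "zd_cycle cs" "f \<in> set cs" "g \<in> set cs"
    show "6 \<le> length cs"
    proof (rule ccontr)
      assume "\<not> 6 \<le> length cs"
      with cs assms(1) have "zd_within2 f g"
        by (intro zd_cycle_short_within2) auto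
      with assms(2,3) show False
        using zd_within2_Zset by blast
    qed
  qed
  then show ?thesis by (simp add: numeral_eq_enat)
qed

lemma cfg_le_3:
  fixes f g :: "'a::t1_space \<Rightarrow> real"
  assumes vertices: "zd_vertex f" "zd_vertex g" "f \<noteq> g"
    and cover: "Zset f \<union> Zset g = UNIV" and common: "Zset f \<inter> Zset g \<noteq> {}"
  shows "cfg f g \<le> 3"
proof -
  obtain x where x: "f x = 0" "g x = 0"
    using common by (auto simp: Zset_def)
  let ?e = "indicator {x} :: 'a \<Rightarrow> real"
  have "zd_cycle [f, g, ?e]"
  proof (rule zd_cycleI)
    show "distinct [f, g, ?e]"
      using x vertices(3) by (auto dest: fun_cong[where x = x])
    show "\<forall>h\<in>set [f, g, ?e]. zd_vertex h"
      using vertices zd_vertex_indicator_zero[OF vertices(1) x(1)] by simp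
    show "\<forall>i < length [f, g, ?e]. \<forall>z. ([f, g, ?e] ! i) z * ([f, g, ?e] ! ((i + 1) mod length [f, g, ?e])) z = 0"
      using cover x unfolding list.size by (auto simp: Zset_def All_less_Suc indicator_def)
  qed simp
  then show ?thesis
    using cfg_le_length[of "[f, g, ?e]" f g] by (simp add: numeral_eq_enat eval_nat_numeral)
qed

lemma cfg_le_4_of_cover:
  fixes f g :: "'a::t1_space \<Rightarrow> real"
  assumes vertices: "zd_vertex f" "zd_vertex g" "f \<noteq> g"
    and cover: "Zset f \<union> Zset g = UNIV"
  shows "cfg f g \<le> 4"
proof -
  have fg: "f z * g z = 0" for z
    using cover by (auto simp: Zset_def)
  obtain a b where a: "f a \<noteq> 0" and b: "g b \<noteq> 0"
    using vertices(1,2) by (auto simp: zd_vertex_def fun_eq_iff)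
  with fg have "g a = 0" "f b = 0" by (metis mult_eq_0_iff)+
  let ?f2 = "\<lambda>z. 2 * f z" and ?g2 = "\<lambda>z. 2 * g z"
  have "zd_cycle [f, g, ?f2, ?g2]"
  proof (rule zd_cycleI)
    show "distinct [f, g, ?f2, ?g2]"
      using a b \<open>g a = 0\<close> \<open>f b = 0\<close> vertices(3)
      by (auto dest: fun_cong[where x = a] fun_cong[where x = b])
    show "\<forall>h\<in>set [f, g, ?f2, ?g2]. zd_vertex h"
      using vertices by (simp add: zd_vertex_scale)
    show "\<forall>i < length [f, g, ?f2, ?g2]. \<forall>z. ([f, g, ?f2, ?g2] ! i) z * ([f, g, ?f2, ?g2] ! ((i + 1) mod length [f, g, ?f2, ?g2])) z = 0"
      using fg unfolding list.size by (auto simp: All_less_Suc)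
  qed simp
  then show ?thesis
    using cfg_le_length[of "[f, g, ?f2, ?g2]" f g] by (simp add: numeral_eq_enat eval_nat_numeral)
qed

lemma cfg_le_4_of_common_zero:
  fixes f g :: "'a::t1_space \<Rightarrow> real"
  assumes vertices: "zd_vertex f" "zd_vertex g" "f \<noteq> g"
    and common: "Zset f \<inter> Zset g \<noteq> {}"
  shows "cfg f g \<le> 4"
proof -
  obtain x where x: "f x = 0" "g x = 0"
    using common by (auto simp: Zset_def)
  let ?e = "indicator {x} :: 'a \<Rightarrow> real"
  let ?e2 = "\<lambda>z. 2 * ?e z"
  have "zd_cycle [f, ?e, g, ?e2]"
  proof (rule zd_cycleI)
    show "distinct [f, ?e, g, ?e2]"
      using x vertices(3) by (auto dest: fun_cong[where x = x])
    show "\<forall>h\<in>set [f, ?e, g, ?e2]. zd_vertex h"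
      using vertices zd_vertex_indicator_zero[OF vertices(1) x(1)] by (simp add: zd_vertex_scale)
    show "\<forall>i < length [f, ?e, g, ?e2]. \<forall>z. ([f, ?e, g, ?e2] ! i) z * ([f, ?e, g, ?e2] ! ((i + 1) mod length [f, ?e, g, ?e2])) z = 0"
      using x unfolding list.size by (auto simp: All_less_Suc indicator_def)
  qed simp
  then show ?thesis
    using cfg_le_length[of "[f, ?e, g, ?e2]" f g] by (simp add: numeral_eq_enat eval_nat_numeral)
qed

lemma cfg_le_6:
  fixes f g :: "'a::t1_space \<Rightarrow> real"
  assumes vertices: "zd_vertex f" "zd_vertex g" "f \<noteq> g"
    and no_cover: "Zset f \<union> Zset g \<noteq> UNIV" and disjoint: "Zset f \<inter> Zset g = {}"
  shows "cfg f g \<le> 6"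
proof -
  obtain w where w: "f w \<noteq> 0" "g w \<noteq> 0"
    using no_cover by (auto simp: Zset_def)
  obtain x y where x: "f x = 0" and y: "g y = 0"
    using vertices(1,2) by (auto simp: zd_vertex_iff_Zset Zset_def)
  with disjoint w have "g x \<noteq> 0" "f y \<noteq> 0" "x \<noteq> y" "w \<noteq> x" "w \<noteq> y"
    by (auto simp: Zset_def)
  let ?ex = "indicator {x} :: 'a \<Rightarrow> real" and ?ey = "indicator {y} :: 'a \<Rightarrow> real"
  let ?ex2 = "\<lambda>z. 2 * ?ex z" and ?ey2 = "\<lambda>z. 2 * ?ey z"
  let ?cs = "[f, ?ex, ?ey, g, ?ey2, ?ex2]"
  have "zd_cycle ?cs"
  proof (rule zd_cycleI)
    show "distinct ?cs"
      using x y w \<open>g x \<noteq> 0\<close> \<open>f y \<noteq> 0\<close> \<open>x \<noteq> y\<close> \<open>w \<noteq> x\<close> \<open>w \<noteq> y\<close> vertices(3)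
      by (auto dest: fun_cong[where x = x] fun_cong[where x = y] fun_cong[where x = w])
    show "\<forall>h\<in>set ?cs. zd_vertex h"
      using vertices zd_vertex_indicator_zero[OF vertices(1) x] zd_vertex_indicator_zero[OF vertices(2) y]
        by (simp add: zd_vertex_scale)
    show "\<forall>i < length ?cs. \<forall>z. (?cs ! i) z * (?cs ! ((i + 1) mod length ?cs)) z = 0"
      using x y \<open>x \<noteq> y\<close> unfolding list.size by (auto simp: All_less_Suc indicator_def)
  qed simp
  then show ?thesis
    using cfg_le_length[of ?cs f g] by (simp add: numeral_eq_enat eval_nat_numeral)
qed

theorem theorem8p16:
  fixes f g :: "'a::t1_space \<Rightarrow> real"
  assumes "\<exists>a b :: 'a. a \<noteq> b"
    and "zd_vertex f" and "zd_vertex g" and "f \<noteq> g"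
  shows "(cfg f g = 3 \<longleftrightarrow> Zset f \<union> Zset g = UNIV \<and> Zset f \<inter> Zset g \<noteq> {})
    \<and> (cfg f g = 4 \<longleftrightarrow> (Zset f \<union> Zset g = UNIV \<and> Zset f \<inter> Zset g = {})
                        \<or> (Zset f \<union> Zset g \<noteq> UNIV \<and> Zset f \<inter> Zset g \<noteq> {}))
    \<and> (cfg f g = 6 \<longleftrightarrow> Zset f \<union> Zset g \<noteq> UNIV \<and> Zset f \<inter> Zset g = {})"
proof -
  note vertices = assms(2-4)
  let ?cover = "Zset f \<union> Zset g = UNIV" and ?common = "Zset f \<inter> Zset g \<noteq> {}"
  have "cfg f g = 3" if ?cover ?common
    using cfg_le_3[OF vertices that] cfg_ge_3 by (rule antisym)
  moreover have "cfg f g = 4" if "\<not> (?cover \<and> ?common)" "?cover \<or> ?common"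
    using that cfg_le_4_of_cover[OF vertices] cfg_le_4_of_common_zero[OF vertices]
      cfg_ge_4[OF vertices(3) that(1)] by (metis antisym)
  moreover have "cfg f g = 6" if "\<not> ?cover" "\<not> ?common"
    using cfg_le_6[OF vertices] cfg_ge_6[OF vertices(3)] that by (metis antisym)
  ultimately show ?thesis by (cases ?cover; cases ?common) simp_all
qed

end
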